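(* Let $m\in\mathbb{N}$ and $\beta\in(1,\mathcal{G}(m))$. There exists a constant $c(\beta)>0$, depending only on $\beta$ (and $m$), such that for every $x\in(0,\frac{m}{\beta-1})$, $\dim_H(\Sigma_{\beta,m}(x))\ge c(\beta)$.
   Context: $\mathcal{G}(m)=k+1$ if $m=2k$ and $\mathcal{G}(m)=\frac{k+1+\sqrt{k^2+6k+5}}{2}$ if $m=2k+1$. For $x\in[0,\frac{m}{\beta-1}]$, $\Sigma_{\beta,m}(x)=\{(\epsilon_i)_{i=1}^\infty\in\{0,\ldots,m\}^{\mathbb{N}}:\sum_{i\ge1}\epsilon_i\beta^{-i}=x\}$. The space $\{0,\ldots,m\}^{\mathbb{N}}$ carries the metric $d(x,y)=(m+1)^{-n(x,y)}$ for $x\ne y$, where $n(x,y)=\inf\{i:x_i\ne y_i\}$, and $d(x,x)=0$; Hausdorff dimension is taken with respect to $d$. *)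

theory Defs
  imports "HOL-Analysis.Analysis"
begin

definition G :: "nat \<Rightarrow> real" where
  "G m = (if even m then real (m div 2) + 1
          else (let k = real (m div 2) in (k + 1 + sqrt (k^2 + 6*k + 5)) / 2))"

text \<open>Sequences (epsilon_i) for i >= 1 are represented 0-based: eps 0 is epsilon_1.\<close>
definition seq_space :: "nat \<Rightarrow> (nat \<Rightarrow> nat) set" where
  "seq_space m = {e. \<forall>i. e i \<le> m}"

text \<open>d(x,y) = (m+1)^(-n(x,y)), n(x,y) the first (1-based) index where x and y differ.\<close>
definition seq_dist :: "nat \<Rightarrow> (nat \<Rightarrow> nat) \<Rightarrow> (nat \<Rightarrow> nat) \<Rightarrow> real" where
  "seq_dist m x y = (if x = y then 0 else 1 / (real m + 1) ^ Suc (LEAST i. x i \<noteq> y i))"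

definition seq_diam :: "nat \<Rightarrow> (nat \<Rightarrow> nat) set \<Rightarrow> real" where
  "seq_diam m U = (if U = {} then 0 else Sup {seq_dist m x y | x y. x \<in> U \<and> y \<in> U})"

definition hausdorff_pre :: "nat \<Rightarrow> real \<Rightarrow> real \<Rightarrow> (nat \<Rightarrow> nat) set \<Rightarrow> ennreal" where
  "hausdorff_pre m s \<delta> E =
     (INF U \<in> {U :: nat \<Rightarrow> (nat \<Rightarrow> nat) set.
                 (\<forall>i. U i \<subseteq> seq_space m \<and> seq_diam m (U i) \<le> \<delta>) \<and> E \<subseteq> (\<Union>i. U i)}.
        (\<Sum>i. ennreal (seq_diam m (U i) powr s)))"

definition hausdorff_measure :: "nat \<Rightarrow> real \<Rightarrow> (nat \<Rightarrow> nat) set \<Rightarrow> ennreal" where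
  "hausdorff_measure m s E = (SUP \<delta> \<in> {0<..}. hausdorff_pre m s \<delta> E)"

definition hausdorff_dim :: "nat \<Rightarrow> (nat \<Rightarrow> nat) set \<Rightarrow> ereal" where
  "hausdorff_dim m E = Inf {ereal s | s. 0 \<le> s \<and> hausdorff_measure m s E = 0}"

definition Sigma_bm :: "real \<Rightarrow> nat \<Rightarrow> real \<Rightarrow> (nat \<Rightarrow> nat) set" where
  "Sigma_bm \<beta> m x = {e \<in> seq_space m. (\<lambda>i. real (e i) / \<beta> ^ Suc i) sums x}"

end

theory Submission
  imports Defs "HOL-Probability.Infinite_Product_Measure" "HOL-Probability.Probability_Mass_Function"
begin

text \<open>
  Let \<open>M = m / (\<beta> - 1)\<close>. For \<open>\<beta> < G m\<close> there is a margin \<open>\<epsilon> > 0\<close> and a switch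
  region of remainders \<open>y\<close> for which two consecutive digits \<open>d, d + 1\<close> both keep the next
  remainder \<open>\<beta> y - digit\<close> inside \<open>(\<epsilon>, M - \<epsilon>)\<close>, and from every \<open>y \<in> [\<epsilon>, M - \<epsilon>]\<close> forced
  digit choices reach the switch region within a uniform number \<open>N\<close> of steps. Letting fair
  coins decide the digit at each visit of the switch region maps the Bernoulli measure onto
  \<open>Sigma_bm \<beta> m x\<close>, and the first \<open>n\<close> digits of an expansion determine at least
  \<open>(n - T) / (N + 1)\<close> coins. So a set of diameter about \<open>(m + 1)^-n\<close> has mass
  \<open>O(2 ^ (-n / (N + 1)))\<close>, and the mass distribution principle bounds the dimension below by
  \<open>ln 2 / ((N + 1) ln (m + 1))\<close>, independently of \<open>x\<close>.
\<close>

definition coin_measure :: "(nat \<Rightarrow> bool) measure" where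
  "coin_measure = PiM UNIV (\<lambda>_. measure_pmf (bernoulli_pmf (1/2)))"

definition cylinder :: "(nat \<Rightarrow> bool) \<Rightarrow> nat \<Rightarrow> (nat \<Rightarrow> bool) set" where
  "cylinder b k = {\<omega>. \<forall>j<k. \<omega> j = b j}"

lemma space_coin_measure [simp]: "space coin_measure = UNIV"
  by (simp add: coin_measure_def space_PiM PiE_UNIV_domain)

lemma prob_space_coin_measure: "prob_space coin_measure"
  unfolding coin_measure_def by (rule prob_space_PiM, rule prob_space_measure_pmf)

lemma cylinder_eq_prod_emb:
  "cylinder b k = prod_emb UNIV (\<lambda>_. measure_pmf (bernoulli_pmf (1/2))) {..<k} (PiE {..<k} (\<lambda>j. {b j}))"
  by (rule set_eqI)
    (simp add: cylinder_def prod_emb_def space_PiM PiE_UNIV_domain restrict_PiE_iff Pi_iff, blast)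

lemma cylinder_in_sets: "cylinder b k \<in> sets coin_measure"
  unfolding cylinder_eq_prod_emb coin_measure_def by (rule sets_PiM_I) auto

lemma emeasure_cylinder: "emeasure coin_measure (cylinder b k) = ennreal ((1/2)^k)"
proof -
  have "emeasure coin_measure (cylinder b k)
      = (\<Prod>j<k. emeasure (measure_pmf (bernoulli_pmf (1/2))) {b j})"
    unfolding cylinder_eq_prod_emb coin_measure_def
    by (rule emeasure_PiM_emb) (auto simp: prob_space_measure_pmf)
  also have "\<dots> = (\<Prod>j<k. ennreal (1/2))"
    by (intro prod.cong refl) (simp add: emeasure_pmf_single)
  also have "\<dots> = ennreal ((1/2)^k)"
    by (simp only: prod_constant card_lessThan, rule ennreal_power, simp)
  finally show ?thesis .
qed

lemma seq_dist_le_base: "seq_dist m p q \<le> 1 / (real m + 1)"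
proof (cases "p = q")
  case False
  have "real m + 1 \<le> (real m + 1) ^ Suc (LEAST i. p i \<noteq> q i)"
    by (simp add: mult_le_cancel_left1 one_le_power)
  then show ?thesis using False by (simp add: seq_dist_def frac_le)
qed (simp add: seq_dist_def)

lemma seq_dist_pos: "p \<noteq> q \<Longrightarrow> 0 < seq_dist m p q"
  by (simp add: seq_dist_def)

lemma seq_dist_less_imp_agree:
  assumes "seq_dist m p q < (1 / (real m + 1)) ^ n"
  shows "\<forall>i<n. p i = q i"
proof (cases "p = q")
  case False
  define j where "j = (LEAST i. p i \<noteq> q i)"
  have "(1 / (real m + 1)) ^ Suc j < (1 / (real m + 1)) ^ n"
    using assms False unfolding seq_dist_def j_def by (simp add: power_one_over)
  moreover have "(1 / (real m + 1)) ^ n \<le> (1 / (real m + 1)) ^ Suc j" if "Suc j \<le> n"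
    using that by (intro power_decreasing) auto
  ultimately have "n \<le> j" by linarith
  then show ?thesis
    using not_less_Least[of _ "\<lambda>i. p i \<noteq> q i"] unfolding j_def by (meson less_le_trans)
qed simp

lemma bdd_above_seq_dist: "bdd_above {seq_dist m x y | x y. x \<in> U \<and> y \<in> U}"
  using seq_dist_le_base by (intro bdd_aboveI[of _ "1 / (real m + 1)"]) blast

lemma seq_dist_le_diam: "p \<in> U \<Longrightarrow> q \<in> U \<Longrightarrow> seq_dist m p q \<le> seq_diam m U"
  unfolding seq_diam_def using bdd_above_seq_dist by (auto intro!: cSup_upper)

lemma seq_diam_le_base: "seq_diam m U \<le> 1 / (real m + 1)"
proof (cases "U = {}")
  case False
  then have "{seq_dist m x y | x y. x \<in> U \<and> y \<in> U} \<noteq> {}" by blast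
  then have "Sup {seq_dist m x y | x y. x \<in> U \<and> y \<in> U} \<le> 1 / (real m + 1)"
    by (rule cSup_least) (use seq_dist_le_base in blast)
  then show ?thesis using False by (simp add: seq_diam_def)
qed (simp add: seq_diam_def)

lemma seq_diam_nonpos_imp_eq: "seq_diam m U \<le> 0 \<Longrightarrow> p \<in> U \<Longrightarrow> q \<in> U \<Longrightarrow> p = q"
  using seq_dist_le_diam[of p U q m] seq_dist_pos[of p q m] by fastforce

lemma seq_diam_common_prefix:
  assumes "1 \<le> m" and "0 < seq_diam m U" and "p \<in> U"
  shows "\<exists>n. (1 / (real m + 1)) ^ Suc n \<le> seq_diam m U \<and> (\<forall>q\<in>U. \<forall>i<n. q i = p i)"
proof -
  define D where "D = seq_diam m U"
  define r where "r = 1 / (real m + 1)"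
  have r: "0 < r" "r < 1" using assms(1) unfolding r_def by auto
  have "D \<le> r" unfolding D_def r_def by (rule seq_diam_le_base)
  obtain n0 where "r ^ n0 < D"
    using real_arch_pow_inv[OF _ r(2), of D] assms(2) unfolding D_def by blast
  then have ex: "\<exists>n. r ^ n \<le> D" by (blast intro: less_imp_le)
  define n1 where "n1 = (LEAST n. r ^ n \<le> D)"
  have n1: "r ^ n1 \<le> D" unfolding n1_def using LeastI_ex[OF ex] .
  have "n1 \<noteq> 0"
  proof
    assume "n1 = 0"
    with n1 \<open>D \<le> r\<close> r show False by simp
  qed
  then obtain n where n: "n1 = Suc n" using not0_implies_Suc by blast
  then have "D < r ^ n" using not_less_Least[of n "\<lambda>n. r ^ n \<le> D"] unfolding n1_def by simp
  have "\<forall>i<n. q i = p i" if "q \<in> U" for q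
  proof -
    have "seq_dist m q p < r ^ n"
      using seq_dist_le_diam[OF that assms(3), of m] \<open>D < r ^ n\<close> unfolding D_def by linarith
    then show ?thesis using seq_dist_less_imp_agree unfolding r_def by blast
  qed
  then show ?thesis using n1 n unfolding D_def r_def by blast
qed

lemma hausdorff_dim_ge_if_measure_nonzero:
  assumes "\<And>s. 0 \<le> s \<Longrightarrow> s \<le> c \<Longrightarrow> hausdorff_measure m s E \<noteq> 0"
  shows "ereal c \<le> hausdorff_dim m E"
  unfolding hausdorff_dim_def
proof (rule Inf_greatest)
  fix z assume "z \<in> {ereal s |s. 0 \<le> s \<and> hausdorff_measure m s E = 0}"
  then obtain s where "z = ereal s" "0 \<le> s" "hausdorff_measure m s E = 0" by blast
  then show "ereal c \<le> z" using assms by force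
qed

lemma ennreal_inverse_le_of_affine_bound:
  fixes C :: real and S :: ennreal
  assumes "0 < C" and "1 \<le> ennreal C * S + ennreal (1/2)"
  shows "ennreal (1 / (2 * C)) \<le> S"
proof (cases S)
  case (real r)
  have "ennreal C * S = ennreal (C * r)"
    using real assms(1) by (simp add: ennreal_mult)
  moreover have "ennreal (C * r) + ennreal (1/2) = ennreal (C * r + 1/2)"
    using real(1) assms(1) by (intro ennreal_plus[symmetric]) auto
  ultimately have "ennreal 1 \<le> ennreal (C * r + 1/2)"
    using assms(2) by (metis ennreal_1)
  then have "1 \<le> C * r + 1/2"
    using real(1) assms(1) by (subst (asm) ennreal_le_iff) auto
  then show ?thesis using real assms(1) by (simp add: field_simps)
qed simp

lemma hausdorff_measure_nonzero_by_mass_distribution: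
  fixes P :: "'a measure" and f :: "'a \<Rightarrow> nat \<Rightarrow> nat"
  assumes P: "prob_space P" and C: "0 < C" and \<delta>: "0 < \<delta>" and image: "f ` space P \<subseteq> E"
    and local_mass: "\<And>U \<eta>. U \<subseteq> seq_space m \<Longrightarrow> seq_diam m U \<le> \<delta> \<Longrightarrow> 0 < \<eta> \<Longrightarrow>
      \<exists>A. A \<in> sets P \<and> {\<omega> \<in> space P. f \<omega> \<in> U} \<subseteq> A \<and>
        emeasure P A \<le> ennreal (C * seq_diam m U powr s + \<eta>)"
  shows "hausdorff_measure m s E \<noteq> 0"
proof -
  have half: "(\<Sum>i. ennreal ((1/2::real)^(i+2))) = ennreal (1/2)"
  proof -
    have "(\<lambda>i. 1/4 * (1/2::real)^i) sums (1/4 * (1 / (1 - 1/2)))"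
      by (intro sums_mult geometric_sums) simp
    then have sums: "(\<lambda>i. (1/2::real)^(i+2)) sums (1/2)" by (simp add: power_add)
    then have "(\<Sum>i. ennreal ((1/2::real)^(i+2))) = ennreal (\<Sum>i. (1/2::real)^(i+2))"
      by (intro suminf_ennreal2) (auto simp: sums_summable)
    then show ?thesis by (simp only: sums_unique[OF sums, symmetric])
  qed
  have "ennreal (1 / (2 * C)) \<le> (\<Sum>i. ennreal (seq_diam m (U i) powr s))"
    if U: "\<forall>i. U i \<subseteq> seq_space m \<and> seq_diam m (U i) \<le> \<delta>" "E \<subseteq> (\<Union>i. U i)" for U
  proof -
    have choice_ex: "\<forall>i. \<exists>A. A \<in> sets P \<and> {\<omega> \<in> space P. f \<omega> \<in> U i} \<subseteq> A \<and>
        emeasure P A \<le> ennreal (C * seq_diam m (U i) powr s + (1/2)^(i+2))"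
      using U(1) by (intro allI local_mass) auto
    then obtain A where A: "\<And>i. A i \<in> sets P" "\<And>i. {\<omega> \<in> space P. f \<omega> \<in> U i} \<subseteq> A i"
        "\<And>i. emeasure P (A i) \<le> ennreal (C * seq_diam m (U i) powr s + (1/2)^(i+2))"
      using choice[OF choice_ex] by blast
    have cover: "space P \<subseteq> (\<Union>i. A i)"
    proof
      fix \<omega> assume \<omega>: "\<omega> \<in> space P"
      then obtain i where "f \<omega> \<in> U i" using image U(2) by blast
      then show "\<omega> \<in> (\<Union>i. A i)" using A(2)[of i] \<omega> by blast
    qed
    have "1 = emeasure P (space P)" using prob_space.emeasure_space_1[OF P] by simp
    also have "\<dots> \<le> emeasure P (\<Union>i. A i)"
      using cover A(1) by (intro emeasure_mono) auto
    also have "\<dots> \<le> (\<Sum>i. emeasure P (A i))"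
      using A(1) by (intro emeasure_subadditive_countably) auto
    also have "\<dots> \<le> (\<Sum>i. ennreal (C * seq_diam m (U i) powr s) + ennreal ((1/2)^(i+2)))"
      using A(3) C by (intro suminf_le summableI) (simp add: ennreal_plus)
    also have "\<dots> = (\<Sum>i. ennreal (C * seq_diam m (U i) powr s)) + (\<Sum>i. ennreal ((1/2::real)^(i+2)))"
      by (rule suminf_add[OF summableI summableI, symmetric])
    also have "\<dots> = ennreal C * (\<Sum>i. ennreal (seq_diam m (U i) powr s)) + ennreal (1/2)"
      unfolding half using C by (simp add: ennreal_mult)
    finally show ?thesis by (rule ennreal_inverse_le_of_affine_bound[OF C])
  qed
  then have "ennreal (1 / (2 * C)) \<le> hausdorff_pre m s \<delta> E"
    unfolding hausdorff_pre_def by (intro INF_greatest) auto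
  also have "\<dots> \<le> hausdorff_measure m s E"
    unfolding hausdorff_measure_def using \<delta> by (intro SUP_upper) simp
  finally have "ennreal (1 / (2 * C)) \<le> hausdorff_measure m s E" .
  moreover have "0 < ennreal (1 / (2 * C))" using C by simp
  ultimately show ?thesis by auto
qed

lemma half_power_le_powr_of_linear_bound:
  fixes a D s :: real and n T k m :: nat
  assumes m: "1 \<le> m" and a: "0 < a" and nk: "real n - real T \<le> a * real k"
    and s: "0 \<le> s" "s \<le> ln 2 / (a * ln (real m + 1))"
    and D: "(1 / (real m + 1)) ^ Suc n \<le> D"
  shows "(1/2)^k \<le> 2 powr ((real T + 1) / a) * D powr s"
proof -
  define q where "q = (1 / (real m + 1)) ^ Suc n"
  have "q \<le> 1" unfolding q_def by (rule power_le_one) auto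
  then have q: "0 < q" "q \<le> 1" unfolding q_def by auto
  have "(1/2::real)^k = 2 powr (- real k)"
    by (simp add: powr_minus powr_realpow power_one_over inverse_eq_divide)
  also have "\<dots> \<le> 2 powr (- (real n - real T) / a)"
    using nk a by (intro powr_mono) (auto simp: field_simps)
  also have "\<dots> = 2 powr ((real T + 1) / a) * 2 powr (- (real n + 1) / a)"
    using a by (simp add: powr_add[symmetric] field_simps)
  also have "2 powr (- (real n + 1) / a) = q powr (ln 2 / (a * ln (real m + 1)))"
  proof -
    have ln_q: "ln q = - (real n + 1) * ln (real m + 1)"
      unfolding q_def using m by (simp add: ln_realpow ln_div algebra_simps)
    have "0 < ln (real m + 1)" using m by simp
    then have "ln 2 / (a * ln (real m + 1)) * ln q = - (real n + 1) / a * ln 2"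
      unfolding ln_q using a by (simp add: field_simps)
    then show ?thesis using q by (simp add: powr_def)
  qed
  also have "q powr (ln 2 / (a * ln (real m + 1))) \<le> q powr s"
    using q s by (intro powr_mono') auto
  also have "q powr s \<le> D powr s"
    using q s D unfolding q_def by (intro powr_mono2) auto
  finally show ?thesis by (simp add: mult_left_mono)
qed

text \<open>
  The remainders \<open>y = \<beta>^n (x - \<Sum>i<n. d i / \<beta>^(i+1))\<close> of an expansion \<open>d\<close> evolve by
  \<open>y \<mapsto> \<beta> y - d n\<close> and must stay in \<open>(0, M)\<close>. Outside the switch region the digit is
  forced: \<open>0\<close> near \<open>0\<close>, \<open>m\<close> near \<open>M\<close>, and otherwise the digit sending \<open>y\<close> into
  \<open>[M - 1 - \<epsilon>, 1 + \<epsilon>]\<close>; \<open>switching_gap\<close> says that this interval lies in the switch region.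
\<close>

locale switching_dynamics =
  fixes m :: nat and \<beta> M \<epsilon> :: real
  assumes m_ge_1: "1 \<le> m" and \<beta>_gt_1: "1 < \<beta>" and M_eq: "M * (\<beta> - 1) = real m"
  and \<epsilon>_pos: "0 < \<epsilon>" and \<epsilon>_lt: "1 + \<epsilon> < M" and \<epsilon>_small: "(\<beta>+1)*(1+\<epsilon>) < M*\<beta>"
  and switching_gap: "\<And>z. M-1-\<epsilon> \<le> z \<Longrightarrow> z \<le> 1+\<epsilon> \<Longrightarrow>
              \<exists>d::nat. d+1 \<le> m \<and> real d+1+\<epsilon> < \<beta>*z \<and> \<beta>*z < real d+M-\<epsilon>"
begin

lemma M_times_\<beta>: "M * \<beta> = M + real m" using M_eq by (simp add: algebra_simps)

definition switching :: "real \<Rightarrow> bool" where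
  "switching y \<longleftrightarrow> (\<exists>d::nat. d+1 \<le> m \<and> real d+1+\<epsilon> < \<beta>*y \<and> \<beta>*y < real d+M-\<epsilon>)"
definition switch_digit :: "real \<Rightarrow> nat" where
  "switch_digit y = (SOME d::nat. d+1 \<le> m \<and> real d+1+\<epsilon> < \<beta>*y \<and> \<beta>*y < real d+M-\<epsilon>)"
definition low :: "real \<Rightarrow> bool" where "low y \<longleftrightarrow> \<beta>*y \<le> 1+\<epsilon>"
definition high :: "real \<Rightarrow> bool" where "high y \<longleftrightarrow> M*\<beta> - 1 - \<epsilon> \<le> \<beta>*y"
definition mid_digit :: "real \<Rightarrow> nat" where
  "mid_digit y = (SOME d::nat. d+2 \<le> m \<and> real d + M - \<epsilon> \<le> \<beta>*y \<and> \<beta>*y \<le> real d+2+\<epsilon>)"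
definition forced_digit :: "real \<Rightarrow> nat" where
  "forced_digit y = (if low y then 0 else if high y then m else mid_digit y + 1)"
definition digit :: "real \<Rightarrow> bool \<Rightarrow> nat" where
  "digit y b = (if switching y then (if b then switch_digit y else switch_digit y + 1) else forced_digit y)"
definition forced_step :: "real \<Rightarrow> real" where "forced_step y = \<beta>*y - real (forced_digit y)"

lemma switching_bounds: assumes "switching y" shows "0 < y" "y < M"
proof -
  obtain d::nat where d: "d+1 \<le> m" "real d+1+\<epsilon> < \<beta>*y" "\<beta>*y < real d+M-\<epsilon>"
    using assms unfolding switching_def by blast
  have "0 < \<beta>*y" using d \<epsilon>_pos by linarith
  then show "0 < y" using \<beta>_gt_1 by (simp add: zero_less_mult_iff)
  have "real d + 1 \<le> real m" using d(1) by linarith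
  then have "\<beta>*y < \<beta>*M" using d(3) M_times_\<beta> \<epsilon>_pos by (simp add: algebra_simps)
  then show "y < M" using \<beta>_gt_1 by simp
qed

lemma switch_digit_bounds: assumes "switching y"
  shows "switch_digit y + 1 \<le> m" "real (switch_digit y)+1+\<epsilon> < \<beta>*y" "\<beta>*y < real (switch_digit y)+M-\<epsilon>"
proof -
  have "\<exists>d::nat. d+1 \<le> m \<and> real d+1+\<epsilon> < \<beta>*y \<and> \<beta>*y < real d+M-\<epsilon>"
    using assms unfolding switching_def .
  from someI_ex[OF this] show "switch_digit y + 1 \<le> m" "real (switch_digit y)+1+\<epsilon> < \<beta>*y"
    "\<beta>*y < real (switch_digit y)+M-\<epsilon>"
    unfolding switch_digit_def by blast+
qed

lemma mid_digit_exists: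
  assumes "0 < y" "y < M" "\<not> switching y" "\<not> low y" "\<not> high y"
  shows "\<exists>d::nat. d+2 \<le> m \<and> real d + M - \<epsilon> \<le> \<beta>*y \<and> \<beta>*y \<le> real d+2+\<epsilon>"
proof -
  define t where "t = \<beta>*y"
  have t1: "1+\<epsilon> < t" using assms(4) unfolding low_def t_def by simp
  have t2: "t < M + real m - 1 - \<epsilon>" using assms(5) M_times_\<beta> unfolding high_def t_def by simp
  define c where "c = \<lceil>t-1-\<epsilon>\<rceil>"
  have c1: "c \<ge> 1" using t1 unfolding c_def by simp
  define d0 where "d0 = nat (c - 1)"
  have rd0: "real d0 = real_of_int c - 1" using c1 unfolding d0_def by simp
  have lo: "real d0 < t-1-\<epsilon>" using rd0 unfolding c_def by linarith
  have hi: "t-1-\<epsilon> \<le> real d0 + 1" using rd0 unfolding c_def by linarith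
  show ?thesis
  proof (cases "d0 + 1 \<le> m")
    case True
    show ?thesis
    proof (cases "t < real d0 + M - \<epsilon>")
      case True
      then have "switching y" using \<open>d0+1 \<le> m\<close> lo unfolding switching_def t_def by force
      with assms(3) show ?thesis by simp
    next
      case False
      then have "real d0 < real m - 1" using t2 by linarith
      then have "d0 + 2 \<le> m" by linarith
      then show ?thesis using False hi unfolding t_def by (intro exI[of _ d0]) auto
    qed
  next
    case False
    then have "real m \<le> real d0" by linarith
    then have "switching y" unfolding switching_def using m_ge_1 lo t2
      by (intro exI[of _ "m-1"]) (auto simp: t_def of_nat_diff)
    with assms(3) show ?thesis by simp
  qed
qed

lemma mid_digit_bounds: assumes "0 < y" "y < M" "\<not> switching y" "\<not> low y" "\<not> high y"
  shows "mid_digit y + 2 \<le> m" "real (mid_digit y) + M - \<epsilon> \<le> \<beta>*y" "\<beta>*y \<le> real (mid_digit y)+2+\<epsilon>"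
  using someI_ex[OF mid_digit_exists[OF assms]] unfolding mid_digit_def by blast+

lemma forced_step_switching: assumes "0 < y" "y < M" "\<not> switching y" "\<not> low y" "\<not> high y"
  shows "switching (forced_step y)"
proof -
  have "forced_step y = \<beta>*y - (real (mid_digit y) + 1)"
    using assms unfolding forced_step_def forced_digit_def by simp
  then show ?thesis
    using mid_digit_bounds[OF assms] switching_gap[of "forced_step y"] unfolding switching_def by auto
qed

lemma forced_step_bounds: assumes "0 < y" "y < M" "\<not> switching y"
  shows "forced_digit y \<le> m" "0 < forced_step y" "forced_step y < M"
proof -
  show "forced_digit y \<le> m"
  proof (cases "low y \<or> high y")
    case True then show ?thesis unfolding forced_digit_def by auto
  next
    case False then show ?thesis using mid_digit_bounds[OF assms] unfolding forced_digit_def by auto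
  qed
  have "0 < forced_step y \<and> forced_step y < M"
  proof (cases "low y")
    case True
    then show ?thesis using assms \<beta>_gt_1 \<epsilon>_lt unfolding forced_step_def forced_digit_def low_def by auto
  next
    case nl: False
    show ?thesis
    proof (cases "high y")
      case True
      have "\<beta>*y < \<beta>*M" using assms \<beta>_gt_1 by simp
      then show ?thesis
        using True nl \<epsilon>_lt M_times_\<beta> unfolding forced_step_def forced_digit_def high_def
        by (auto simp: algebra_simps)
    next
      case False
      have "switching (forced_step y)" using forced_step_switching assms nl False by blast
      then show ?thesis using switching_bounds by blast
    qed
  qed
  then show "0 < forced_step y" "forced_step y < M" by auto
qed

lemma digit_switching_bounds: assumes "switching y"
  shows "digit y b \<le> m" "\<epsilon> < \<beta>*y - real (digit y b)" "\<beta>*y - real (digit y b) < M - \<epsilon>"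
proof -
  note d = switch_digit_bounds[OF assms]
  have "digit y b \<le> m \<and> \<epsilon> < \<beta>*y - real (digit y b) \<and> \<beta>*y - real (digit y b) < M - \<epsilon>"
  proof (cases b)
    case True
    then have "digit y b = switch_digit y" using assms unfolding digit_def by simp
    then show ?thesis using d \<epsilon>_pos by simp
  next
    case False
    then have "digit y b = switch_digit y + 1" using assms unfolding digit_def by simp
    then show ?thesis using d \<epsilon>_pos by simp
  qed
  then show "digit y b \<le> m" "\<epsilon> < \<beta>*y - real (digit y b)" "\<beta>*y - real (digit y b) < M - \<epsilon>" by auto
qed

lemma digit_bounds: assumes "0 < y" "y < M"
  shows "digit y b \<le> m" "0 < \<beta>*y - real (digit y b)" "\<beta>*y - real (digit y b) < M"
proof -
  have "digit y b \<le> m \<and> 0 < \<beta>*y - real (digit y b) \<and> \<beta>*y - real (digit y b) < M"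
  proof (cases "switching y")
    case True then show ?thesis using digit_switching_bounds[OF True, of b] \<epsilon>_pos by auto
  next
    case False then show ?thesis using forced_step_bounds[OF assms False] unfolding digit_def forced_step_def by auto
  qed
  then show "digit y b \<le> m" "0 < \<beta>*y - real (digit y b)" "\<beta>*y - real (digit y b) < M" by auto
qed

text \<open>\<open>run \<omega> x i\<close> is the remainder after \<open>i\<close> digits together with the number of coins used so far:
  the \<open>k\<close>-th coin \<open>\<omega> k\<close> is consumed at the \<open>k\<close>-th visit to the switch region.\<close>

primrec run :: "(nat \<Rightarrow> bool) \<Rightarrow> real \<Rightarrow> nat \<Rightarrow> real \<times> nat" where
  "run \<omega> x 0 = (x, 0)"
| "run \<omega> x (Suc i) = (case run \<omega> x i of (y, k) \<Rightarrow>
      (\<beta>*y - real (digit y (\<omega> k)), if switching y then Suc k else k))"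

definition orbit :: "(nat \<Rightarrow> bool) \<Rightarrow> real \<Rightarrow> nat \<Rightarrow> real" where "orbit \<omega> x i = fst (run \<omega> x i)"
definition flips :: "(nat \<Rightarrow> bool) \<Rightarrow> real \<Rightarrow> nat \<Rightarrow> nat" where "flips \<omega> x i = snd (run \<omega> x i)"
definition expansion :: "(nat \<Rightarrow> bool) \<Rightarrow> real \<Rightarrow> nat \<Rightarrow> nat" where
  "expansion \<omega> x i = digit (orbit \<omega> x i) (\<omega> (flips \<omega> x i))"

lemma orbit_0[simp]: "orbit \<omega> x 0 = x" and flips_0[simp]: "flips \<omega> x 0 = 0"
  by (simp_all add: orbit_def flips_def)

lemma orbit_Suc: "orbit \<omega> x (Suc i) = \<beta> * orbit \<omega> x i - real (expansion \<omega> x i)"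
  and flips_Suc: "flips \<omega> x (Suc i) = (if switching (orbit \<omega> x i) then Suc (flips \<omega> x i) else flips \<omega> x i)"
  by (simp_all add: orbit_def flips_def expansion_def split: prod.split)

lemma orbit_bounds: assumes "0 < x" "x < M" shows "0 < orbit \<omega> x i \<and> orbit \<omega> x i < M"
proof (induction i)
  case 0 then show ?case using assms by simp
next
  case (Suc i)
  then show ?case using digit_bounds[of "orbit \<omega> x i" "\<omega> (flips \<omega> x i)"] unfolding orbit_Suc expansion_def by auto
qed

lemma expansion_le: assumes "0 < x" "x < M" shows "expansion \<omega> x i \<le> m"
  using orbit_bounds[OF assms] digit_bounds unfolding expansion_def by blast

lemma sum_expansion: "(\<Sum>i<n. real (expansion \<omega> x i) / \<beta>^Suc i) = x - orbit \<omega> x n / \<beta>^n"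
proof (induction n)
  case 0 then show ?case by simp
next
  case (Suc n)
  have "\<beta>^n \<noteq> 0" using \<beta>_gt_1 by simp
  have "(\<Sum>i<Suc n. real (expansion \<omega> x i) / \<beta>^Suc i)
      = (x - orbit \<omega> x n / \<beta>^n) + real (expansion \<omega> x n) / \<beta>^Suc n"
    using Suc by simp
  also have "\<dots> = x - orbit \<omega> x (Suc n) / \<beta>^Suc n"
    using \<open>\<beta>^n \<noteq> 0\<close> \<beta>_gt_1 by (simp add: orbit_Suc field_simps)
  finally show ?case .
qed

lemma expansion_in_Sigma: assumes "0 < x" "x < M" shows "expansion \<omega> x \<in> Sigma_bm \<beta> m x"
proof -
  have lim0: "(\<lambda>n. orbit \<omega> x n / \<beta>^n) \<longlonglongrightarrow> 0"
  proof (rule tendsto_sandwich[of "\<lambda>_. 0" _ _ "\<lambda>n. M * (1/\<beta>)^n"])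
    show "\<forall>\<^sub>F n in sequentially. 0 \<le> orbit \<omega> x n / \<beta>^n"
      using orbit_bounds[OF assms] \<beta>_gt_1 by (auto intro!: always_eventually less_imp_le)
    show "\<forall>\<^sub>F n in sequentially. orbit \<omega> x n / \<beta>^n \<le> M * (1/\<beta>)^n"
    proof (intro always_eventually allI)
      fix n
      have "orbit \<omega> x n \<le> M" using orbit_bounds[OF assms] less_imp_le by blast
      then show "orbit \<omega> x n / \<beta>^n \<le> M * (1/\<beta>)^n" using \<beta>_gt_1
        by (simp add: power_one_over divide_right_mono)
    qed
    show "(\<lambda>n. M * (1/\<beta>)^n) \<longlonglongrightarrow> 0"
      using \<beta>_gt_1 by (intro tendsto_mult_right_zero LIMSEQ_power_zero) auto
  qed simp
  have "(\<lambda>n. x - orbit \<omega> x n / \<beta>^n) \<longlonglongrightarrow> x - 0"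
    by (intro tendsto_diff tendsto_const lim0)
  then have "(\<lambda>i. real (expansion \<omega> x i) / \<beta>^Suc i) sums x"
    unfolding sums_def sum_expansion by simp
  moreover have "expansion \<omega> x \<in> seq_space m" using expansion_le[OF assms] unfolding seq_space_def by blast
  ultimately show ?thesis unfolding Sigma_bm_def by blast
qed

lemma flips_mono: assumes "i \<le> j" shows "flips \<omega> x i \<le> flips \<omega> x j"
  using assms by (induction rule: dec_induct) (auto simp: flips_Suc)

lemma orbit_determined: assumes "\<forall>i<n. expansion \<omega> x i = expansion \<omega>' x i"
  shows "orbit \<omega> x n = orbit \<omega>' x n \<and> flips \<omega> x n = flips \<omega>' x n \<and> (\<forall>j<flips \<omega> x n. \<omega> j = \<omega>' j)"
  using assms
proof (induction n)
  case 0 then show ?case by simp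
next
  case (Suc n)
  then have IH: "orbit \<omega> x n = orbit \<omega>' x n" "flips \<omega> x n = flips \<omega>' x n" "\<forall>j<flips \<omega> x n. \<omega> j = \<omega>' j"
    and e: "expansion \<omega> x n = expansion \<omega>' x n" by auto
  show ?case
  proof (cases "switching (orbit \<omega> x n)")
    case True
    have "\<omega> (flips \<omega> x n) = \<omega>' (flips \<omega> x n)"
    proof (rule ccontr)
      assume ne: "\<omega> (flips \<omega> x n) \<noteq> \<omega>' (flips \<omega> x n)"
      have same: "digit (orbit \<omega> x n) (\<omega> (flips \<omega> x n)) = digit (orbit \<omega> x n) (\<omega>' (flips \<omega> x n))"
        using e IH(1,2) unfolding expansion_def by simp
      have "digit (orbit \<omega> x n) True \<noteq> digit (orbit \<omega> x n) False" using True unfolding digit_def by simp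
      then show False using same ne by (cases "\<omega> (flips \<omega> x n)") auto
    qed
    then have "\<forall>j<Suc (flips \<omega> x n). \<omega> j = \<omega>' j" using IH(3) less_Suc_eq by auto
    then show ?thesis using True IH e by (simp add: orbit_Suc flips_Suc)
  next
    case False
    then show ?thesis using IH e by (simp add: orbit_Suc flips_Suc)
  qed
qed

lemma orbit_forced_run:
  assumes forced: "\<forall>l<j. \<not> switching ((forced_step^^l) (orbit \<omega> x i))" and "l \<le> j"
  shows "orbit \<omega> x (i + l) = (forced_step^^l) (orbit \<omega> x i) \<and> flips \<omega> x (i + l) = flips \<omega> x i"
  using \<open>l \<le> j\<close>
proof (induction l)
  case (Suc l)
  then have IH: "orbit \<omega> x (i + l) = (forced_step^^l) (orbit \<omega> x i)" "flips \<omega> x (i + l) = flips \<omega> x i"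
    by auto
  have "\<not> switching (orbit \<omega> x (i + l))" using forced Suc.prems IH by auto
  then show ?case
    using IH
    by (simp add: orbit_Suc flips_Suc expansion_def digit_def forced_step_def[of "(forced_step^^l) _"])
qed simp

lemma switching_from_low:
  "0 < y \<Longrightarrow> y \<le> 1+\<epsilon> \<Longrightarrow> 1+\<epsilon> < \<beta>^Suc n * y \<Longrightarrow> \<exists>j\<le>n+1. switching ((forced_step^^j) y)"
proof (induction n arbitrary: y)
  case 0
  show ?case
  proof (cases "switching y")
    case True then show ?thesis by (intro exI[of _ 0]) auto
  next
    case False
    have nl: "\<not> low y" using 0 unfolding low_def by simp
    have "\<beta>*y \<le> \<beta>*(1+\<epsilon>)" using 0 \<beta>_gt_1 by simp
    then have nh: "\<not> high y" using \<epsilon>_small unfolding high_def by (simp add: algebra_simps)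
    have "switching (forced_step y)" using forced_step_switching[OF 0(1) _ False nl nh] 0 \<epsilon>_lt by simp
    then show ?thesis by (intro exI[of _ 1]) auto
  qed
next
  case (Suc n)
  show ?case
  proof (cases "switching y")
    case True then show ?thesis by (intro exI[of _ 0]) auto
  next
    case False
    have "\<beta>*y \<le> \<beta>*(1+\<epsilon>)" using Suc.prems \<beta>_gt_1 by simp
    then have nh: "\<not> high y" using \<epsilon>_small unfolding high_def by (simp add: algebra_simps)
    show ?thesis
    proof (cases "low y")
      case False
      have "switching (forced_step y)"
        using forced_step_switching[OF Suc.prems(1) _ \<open>\<not> switching y\<close> False nh] Suc.prems \<epsilon>_lt by simp
      then show ?thesis by (intro exI[of _ 1]) auto
    next
      case True
      have Sy: "forced_step y = \<beta>*y" using True unfolding forced_step_def forced_digit_def by simp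
      have "0 < \<beta>*y" using Suc.prems \<beta>_gt_1 by simp
      moreover have "\<beta>*y \<le> 1+\<epsilon>" using True unfolding low_def .
      moreover have "1+\<epsilon> < \<beta>^Suc n * (\<beta>*y)" using Suc.prems(3) by (simp add: algebra_simps)
      ultimately obtain j where "j \<le> n+1" "switching ((forced_step^^j) (forced_step y))" using Suc.IH Sy by metis
      then show ?thesis by (intro exI[of _ "Suc j"]) (auto simp del: funpow.simps simp add: funpow_Suc_right)
    qed
  qed
qed

lemma switching_from_high:
  "y < M \<Longrightarrow> M - y \<le> 1+\<epsilon> \<Longrightarrow> 1+\<epsilon> < \<beta>^Suc n * (M - y) \<Longrightarrow>
    \<exists>j\<le>n+1. switching ((forced_step^^j) y)"
proof (induction n arbitrary: y)
  case 0
  show ?case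
  proof (cases "switching y")
    case True then show ?thesis by (intro exI[of _ 0]) auto
  next
    case False
    have nh: "\<not> high y" using 0 M_times_\<beta> unfolding high_def by (simp add: algebra_simps)
    have "\<beta>*(M-y) \<le> \<beta>*(1+\<epsilon>)" using 0 \<beta>_gt_1 by simp
    then have nl: "\<not> low y" using \<epsilon>_small unfolding low_def by (simp add: algebra_simps)
    have "0 < y" using 0 \<epsilon>_lt by simp
    have "switching (forced_step y)" using forced_step_switching[OF \<open>0<y\<close> 0(1) False nl nh] by simp
    then show ?thesis by (intro exI[of _ 1]) auto
  qed
next
  case (Suc n)
  show ?case
  proof (cases "switching y")
    case True then show ?thesis by (intro exI[of _ 0]) auto
  next
    case False
    have "\<beta>*(M-y) \<le> \<beta>*(1+\<epsilon>)" using Suc.prems \<beta>_gt_1 by simp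
    then have nl: "\<not> low y" using \<epsilon>_small unfolding low_def by (simp add: algebra_simps)
    have "0 < y" using Suc.prems \<epsilon>_lt by simp
    show ?thesis
    proof (cases "high y")
      case False
      have "switching (forced_step y)"
        using forced_step_switching[OF \<open>0<y\<close> Suc.prems(1) \<open>\<not> switching y\<close> nl False] by simp
      then show ?thesis by (intro exI[of _ 1]) auto
    next
      case True
      have Sy: "M - forced_step y = \<beta>*(M - y)"
        using True nl M_times_\<beta> unfolding forced_step_def forced_digit_def by (simp add: algebra_simps)
      have "0 < \<beta>*(M-y)" using Suc.prems \<beta>_gt_1 by simp
      then have "forced_step y < M" using Sy by simp
      moreover have "M - forced_step y \<le> 1+\<epsilon>"
        using True Sy M_times_\<beta> unfolding high_def by (simp add: algebra_simps)
      moreover have "\<beta>^Suc n * (M - forced_step y) = \<beta>^Suc (Suc n) * (M - y)" using Sy by simp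
      moreover have "1+\<epsilon> < \<beta>^Suc n * (M - forced_step y)" using Suc.prems(3) calculation(3) by linarith
      ultimately obtain j where "j \<le> n+1" "switching ((forced_step^^j) (forced_step y))" using Suc.IH by metis
      then show ?thesis by (intro exI[of _ "Suc j"]) (auto simp del: funpow.simps simp add: funpow_Suc_right)
    qed
  qed
qed

lemma switching_within:
  assumes y: "0 < y" "y < M"
    and n: "1 + \<epsilon> < \<beta> ^ Suc n * y" "1 + \<epsilon> < \<beta> ^ Suc n * (M - y)"
  shows "\<exists>j\<le>n+1. switching ((forced_step^^j) y)"
proof (cases "switching y")
  case True
  then show ?thesis by (intro exI[of _ 0]) auto
next
  case False
  consider "low y" | "high y" | "\<not> low y" "\<not> high y" by blast
  then show ?thesis
  proof cases
    case 1
    have "y \<le> \<beta> * y" using y \<beta>_gt_1 by simp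
    then have "y \<le> 1 + \<epsilon>" using 1 unfolding low_def by linarith
    then show ?thesis using switching_from_low y(1) n(1) by blast
  next
    case 2
    have "M - y \<le> \<beta> * (M - y)" using y \<beta>_gt_1 by simp
    also have "\<beta> * (M - y) \<le> 1 + \<epsilon>" using 2 M_times_\<beta> unfolding high_def by (simp add: algebra_simps)
    finally show ?thesis using switching_from_high y(2) n(2) by blast
  next
    case 3
    then have "switching (forced_step y)" using forced_step_switching y False by blast
    then show ?thesis by (intro exI[of _ 1]) auto
  qed
qed

lemma switching_reached:
  assumes "0 < \<eta>"
  shows "\<exists>N. \<forall>y. \<eta> \<le> y \<longrightarrow> y \<le> M - \<eta> \<longrightarrow> (\<exists>j\<le>N. switching ((forced_step^^j) y))"
proof -
  obtain n where "(1 + \<epsilon>) / \<eta> < \<beta> ^ n" using real_arch_pow[OF \<beta>_gt_1] by blast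
  also have "\<dots> \<le> \<beta> ^ Suc n" using \<beta>_gt_1 by simp
  finally have n: "1 + \<epsilon> < \<beta> ^ Suc n * \<eta>" using assms by (simp add: divide_less_eq)
  have "\<exists>j\<le>n+1. switching ((forced_step^^j) y)" if y: "\<eta> \<le> y" "y \<le> M - \<eta>" for y
  proof (rule switching_within)
    have "0 < \<beta> ^ Suc n" using \<beta>_gt_1 by simp
    then have "\<beta> ^ Suc n * \<eta> \<le> \<beta> ^ Suc n * y" "\<beta> ^ Suc n * \<eta> \<le> \<beta> ^ Suc n * (M - y)"
      using y by (intro mult_left_mono; simp)+
    then show "1 + \<epsilon> < \<beta> ^ Suc n * y" "1 + \<epsilon> < \<beta> ^ Suc n * (M - y)"
      using n by linarith+
    show "0 < y" "y < M" using y assms by linarith+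
  qed
  then show ?thesis by blast
qed

lemma next_switch:
  assumes "switching ((forced_step^^j) (orbit \<omega> x t))"
  shows "\<exists>j0\<le>j. flips \<omega> x (t + j0 + 1) = Suc (flips \<omega> x t) \<and>
    \<epsilon> < orbit \<omega> x (t + j0 + 1) \<and> orbit \<omega> x (t + j0 + 1) < M - \<epsilon>"
proof -
  define j0 where "j0 = (LEAST j. switching ((forced_step^^j) (orbit \<omega> x t)))"
  have j0: "switching ((forced_step^^j0) (orbit \<omega> x t))" "j0 \<le> j"
    unfolding j0_def using assms by (rule LeastI, rule Least_le)
  have forced: "\<forall>l<j0. \<not> switching ((forced_step^^l) (orbit \<omega> x t))"
    unfolding j0_def using not_less_Least by blast
  have run: "orbit \<omega> x (t + j0) = (forced_step^^j0) (orbit \<omega> x t)" "flips \<omega> x (t + j0) = flips \<omega> x t"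
    using orbit_forced_run[OF forced, of j0] by simp_all
  then have sw: "switching (orbit \<omega> x (t + j0))" using j0(1) by simp
  have "orbit \<omega> x (Suc (t + j0))
      = \<beta> * orbit \<omega> x (t + j0) - real (digit (orbit \<omega> x (t + j0)) (\<omega> (flips \<omega> x (t + j0))))"
    unfolding orbit_Suc expansion_def ..
  then show ?thesis
    using digit_switching_bounds[OF sw] run sw j0(2) by (intro exI[of _ j0]) (simp add: flips_Suc)
qed

lemma flips_periodic_growth:
  assumes N: "\<forall>y. \<epsilon> \<le> y \<longrightarrow> y \<le> M - \<epsilon> \<longrightarrow> (\<exists>j\<le>N. switching ((forced_step^^j) y))"
    and t0: "\<epsilon> \<le> orbit \<omega> x t0" "orbit \<omega> x t0 \<le> M - \<epsilon>"
  shows "\<exists>t \<le> t0 + r * (N+1).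
    flips \<omega> x t0 + r \<le> flips \<omega> x t \<and> \<epsilon> \<le> orbit \<omega> x t \<and> orbit \<omega> x t \<le> M - \<epsilon>"
proof (induction r)
  case 0
  then show ?case using t0 by (intro exI[of _ t0]) auto
next
  case (Suc r)
  then obtain t where t: "t \<le> t0 + r * (N+1)" "flips \<omega> x t0 + r \<le> flips \<omega> x t"
      "\<epsilon> \<le> orbit \<omega> x t" "orbit \<omega> x t \<le> M - \<epsilon>"
    by blast
  then obtain j where j: "j \<le> N" "switching ((forced_step^^j) (orbit \<omega> x t))" using N by blast
  then obtain j0 where "j0 \<le> j" "flips \<omega> x (t + j0 + 1) = Suc (flips \<omega> x t)"
      "\<epsilon> < orbit \<omega> x (t + j0 + 1)" "orbit \<omega> x (t + j0 + 1) < M - \<epsilon>"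
    using next_switch by blast
  then show ?case using t j(1) by (intro exI[of _ "t + j0 + 1"]) auto
qed

lemma flips_lower_bound:
  assumes N: "\<forall>y. \<epsilon> \<le> y \<longrightarrow> y \<le> M - \<epsilon> \<longrightarrow> (\<exists>j\<le>N. switching ((forced_step^^j) y))"
    and x: "0 < x" "x < M"
  shows "\<exists>T::nat. \<forall>\<omega> n. real n - real T \<le> real (N+1) * real (flips \<omega> x n)"
proof -
  have "0 < min x (M - x)" using x by simp
  from switching_reached[OF this] obtain N0 where
    "\<forall>y. min x (M - x) \<le> y \<longrightarrow> y \<le> M - min x (M - x) \<longrightarrow> (\<exists>j\<le>N0. switching ((forced_step^^j) y))"
    by blast
  moreover have "min x (M - x) \<le> x" "x \<le> M - min x (M - x)" by auto
  ultimately obtain j where j: "switching ((forced_step^^j) x)" by blast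
  have "real n - real (Suc j) \<le> real (N+1) * real (flips \<omega> x n)" for \<omega> n
  proof (cases "n \<le> Suc j")
    case True
    then have "real n \<le> real (Suc j)" by simp
    moreover have "0 \<le> real (N+1) * real (flips \<omega> x n)" by simp
    ultimately show ?thesis by linarith
  next
    case False
    obtain j0 where j0: "j0 \<le> j" "flips \<omega> x (j0 + 1) = 1"
        "\<epsilon> \<le> orbit \<omega> x (j0 + 1)" "orbit \<omega> x (j0 + 1) \<le> M - \<epsilon>"
      using next_switch[of j \<omega> x 0] j by fastforce
    define r where "r = (n - Suc j) div (N+1)"
    obtain t where t: "t \<le> j0 + 1 + r * (N+1)" "1 + r \<le> flips \<omega> x t"
      using flips_periodic_growth[OF N j0(3,4), of r] j0(2) by auto
    have "r * (N+1) \<le> n - Suc j" unfolding r_def by (rule div_times_less_eq_dividend)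
    then have "1 + r \<le> flips \<omega> x n"
      using t j0(1) False flips_mono[of t n \<omega> x] by linarith
    have "n - Suc j < (N+1) + r * (N+1)" unfolding r_def by (rule dividend_less_div_times) simp
    also have "\<dots> = (N+1) * (1 + r)" by (simp add: algebra_simps)
    also have "\<dots> \<le> (N+1) * flips \<omega> x n" using \<open>1 + r \<le> flips \<omega> x n\<close> by (rule mult_le_mono2)
    finally have "real (n - Suc j) < real (N+1) * real (flips \<omega> x n)"
      by (metis of_nat_less_iff of_nat_mult)
    moreover have "real (n - Suc j) = real n - real (Suc j)" using False by (simp add: of_nat_diff)
    ultimately show ?thesis by linarith
  qed
  then show ?thesis by blast
qed

lemma preimage_subset_cylinder:
  assumes "\<forall>q\<in>U. \<forall>j<n. q j = expansion w x j"
  shows "{\<omega>. expansion \<omega> x \<in> U} \<subseteq> cylinder w (flips w x n)"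
proof
  fix \<omega> assume "\<omega> \<in> {\<omega>. expansion \<omega> x \<in> U}"
  then have "\<forall>j<n. expansion w x j = expansion \<omega> x j" using assms by auto
  then show "\<omega> \<in> cylinder w (flips w x n)"
    using orbit_determined[of n w x \<omega>] unfolding cylinder_def by auto
qed

lemma coin_mass_of_expansions_in:
  assumes T: "\<forall>\<omega> n. real n - real T \<le> real (N+1) * real (flips \<omega> x n)"
    and s: "0 \<le> s" "s \<le> ln 2 / (real (N+1) * ln (real m + 1))" and \<eta>: "0 < \<eta>"
  shows "\<exists>A. A \<in> sets coin_measure \<and> {\<omega> \<in> space coin_measure. expansion \<omega> x \<in> U} \<subseteq> A \<and>
    emeasure coin_measure A \<le> ennreal (2 powr ((real T + 1) / real (N+1)) * seq_diam m U powr s + \<eta>)"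
proof (cases "\<exists>w. expansion w x \<in> U")
  case False
  then show ?thesis by (intro exI[of _ "{}"]) auto
next
  case True
  then obtain w where w: "expansion w x \<in> U" by blast
  define C where "C = 2 powr ((real T + 1) / real (N+1))"
  have mass_cylinder: "emeasure coin_measure (cylinder w (flips w x n)) \<le> ennreal (C * seq_diam m U powr s + \<eta>)"
    if "\<forall>q\<in>U. \<forall>j<n. q j = expansion w x j" "(1/2) ^ flips w x n \<le> C * seq_diam m U powr s + \<eta>" for n
    unfolding emeasure_cylinder by (rule ennreal_leI) (rule that(2))
  have "\<exists>n. (\<forall>q\<in>U. \<forall>j<n. q j = expansion w x j) \<and> (1/2) ^ flips w x n \<le> C * seq_diam m U powr s + \<eta>"
  proof (cases "0 < seq_diam m U")
    case True
    then obtain n where n: "(1 / (real m + 1)) ^ Suc n \<le> seq_diam m U" "\<forall>q\<in>U. \<forall>j<n. q j = expansion w x j"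
      using seq_diam_common_prefix[OF m_ge_1 _ w] by blast
    have "(1/2) ^ flips w x n \<le> C * seq_diam m U powr s"
      unfolding C_def using T s n(1) by (intro half_power_le_powr_of_linear_bound[OF m_ge_1]) auto
    then show ?thesis using n(2) \<eta> by (intro exI[of _ n]) auto
  next
    case False
    \<comment> \<open>\<open>U = {expansion w x}\<close>: any prefix works, so take one fixing enough coin flips\<close>
    then have "\<forall>q\<in>U. q = expansion w x" using w seq_diam_nonpos_imp_eq[of m U] by auto
    obtain r where r: "(1/2::real) ^ r < \<eta>" using real_arch_pow_inv[OF \<eta>, of "1/2"] by auto
    define n where "n = T + r * (N+1)"
    have "real (N+1) * real r \<le> real (N+1) * real (flips w x n)"
      using T[rule_format, of n w] unfolding n_def by (simp add: algebra_simps)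
    then have "r \<le> flips w x n" by simp
    then have "(1/2::real) ^ flips w x n \<le> (1/2) ^ r" by (intro power_decreasing) auto
    moreover have "0 \<le> C * seq_diam m U powr s" unfolding C_def by simp
    ultimately have "(1/2) ^ flips w x n \<le> C * seq_diam m U powr s + \<eta>" using r by linarith
    then show ?thesis using \<open>\<forall>q\<in>U. q = expansion w x\<close> by (intro exI[of _ n]) auto
  qed
  then obtain n where n: "\<forall>q\<in>U. \<forall>j<n. q j = expansion w x j"
      "(1/2) ^ flips w x n \<le> C * seq_diam m U powr s + \<eta>"
    by blast
  show ?thesis
  proof (intro exI conjI)
    show "cylinder w (flips w x n) \<in> sets coin_measure" by (rule cylinder_in_sets)
    show "{\<omega> \<in> space coin_measure. expansion \<omega> x \<in> U} \<subseteq> cylinder w (flips w x n)"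
      using preimage_subset_cylinder[OF n(1)] by simp
    show "emeasure coin_measure (cylinder w (flips w x n))
        \<le> ennreal (2 powr ((real T + 1) / real (N+1)) * seq_diam m U powr s + \<eta>)"
      using mass_cylinder[OF n] unfolding C_def .
  qed
qed

lemma hausdorff_dim_Sigma_bm_uniform_bound:
  "\<exists>c>0. \<forall>x. 0 < x \<and> x < M \<longrightarrow> ereal c \<le> hausdorff_dim m (Sigma_bm \<beta> m x)"
proof -
  obtain N where N: "\<forall>y. \<epsilon> \<le> y \<longrightarrow> y \<le> M-\<epsilon> \<longrightarrow> (\<exists>j\<le>N. switching ((forced_step^^j) y))"
    using switching_reached[OF \<epsilon>_pos] by blast
  define c where "c = ln 2 / (real (N+1) * ln (real m + 1))"
  have "ereal c \<le> hausdorff_dim m (Sigma_bm \<beta> m x)" if x: "0 < x" "x < M" for x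
  proof (rule hausdorff_dim_ge_if_measure_nonzero)
    fix s assume "0 \<le> s" "s \<le> c"
    obtain T where "\<forall>\<omega> n. real n - real T \<le> real (N+1) * real (flips \<omega> x n)"
      using flips_lower_bound[OF N x] by blast
    moreover have "s \<le> ln 2 / (real (N+1) * ln (real m + 1))" using \<open>s \<le> c\<close> unfolding c_def .
    moreover have "(\<lambda>\<omega>. expansion \<omega> x) ` space coin_measure \<subseteq> Sigma_bm \<beta> m x"
      using expansion_in_Sigma[OF x] by auto
    ultimately show "hausdorff_measure m s (Sigma_bm \<beta> m x) \<noteq> 0"
      using coin_mass_of_expansions_in \<open>0 \<le> s\<close>
      by (intro hausdorff_measure_nonzero_by_mass_distribution[OF prob_space_coin_measure,
            where f = "\<lambda>\<omega>. expansion \<omega> x" and C = "2 powr ((real T + 1) / real (N+1))" and \<delta> = 1])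
        simp_all
  qed
  moreover have "0 < c" unfolding c_def using m_ge_1 by simp
  ultimately show ?thesis by blast
qed

end

lemma switching_dynamics_exists:
  fixes m :: nat and \<beta> M :: real
  assumes \<beta>: "1 < \<beta>" and M: "M * (\<beta> - 1) = real m"
    and margin: "2 < M \<or> (\<exists>d::nat. d + 1 \<le> m \<and> real d + 1 < \<beta> * (M - 1) \<and> \<beta> < real d + M)"
  shows "\<exists>\<epsilon>. switching_dynamics m \<beta> M \<epsilon>"
proof -
  define gap where "gap g \<longleftrightarrow> (\<forall>z. M - 1 - g \<le> z \<longrightarrow> z \<le> 1 + g \<longrightarrow>
      (\<exists>d::nat. d + 1 \<le> m \<and> real d + 1 + g < \<beta> * z \<and> \<beta> * z < real d + M - g))" for g
  obtain g where g: "0 < g" "gap g" and M1: "1 < M" "\<beta> + 1 < M * \<beta>"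
  proof (cases "2 < M")
    case True
    \<comment> \<open>the interval \<open>[M - 1 - g, 1 + g]\<close> is empty\<close>
    have gap: "gap ((M - 2) / 4)"
      unfolding gap_def
    proof (intro allI impI)
      fix z assume "M - 1 - (M - 2) / 4 \<le> z" "z \<le> 1 + (M - 2) / 4"
      with True have False by (simp add: field_simps)
      then show "\<exists>d::nat. d + 1 \<le> m \<and> real d + 1 + (M - 2) / 4 < \<beta> * z \<and> \<beta> * z < real d + M - (M - 2) / 4" ..
    qed
    have "2 * \<beta> < M * \<beta>" using True \<beta> by (intro mult_strict_right_mono) auto
    then have "\<beta> + 1 < M * \<beta>" using \<beta> by linarith
    with gap True show ?thesis by (intro that[of "(M - 2) / 4"]) auto
  next
    case False
    then obtain d :: nat where d: "d + 1 \<le> m" "real d + 1 < \<beta> * (M - 1)" "\<beta> < real d + M"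
      using margin by blast
    define \<gamma> where "\<gamma> = min (\<beta> * (M - 1) - real d - 1) (real d + M - \<beta>)"
    have \<gamma>: "0 < \<gamma>" using d unfolding \<gamma>_def by simp
    define h where "h = \<gamma> / (2 * (\<beta> + 1))"
    have h_eq: "(\<beta> + 1) * h = \<gamma> / 2" using \<beta> unfolding h_def by (simp add: field_simps)
    have h: "0 < h" "\<beta> * h + h = \<gamma> / 2"
      using \<gamma> \<beta> h_eq by (simp add: h_def, simp add: algebra_simps)
    then have "0 < \<beta> * h" using \<beta> by simp
    have \<gamma>_le: "\<gamma> \<le> \<beta> * M - \<beta> - real d - 1" "\<gamma> \<le> real d + M - \<beta>"
      unfolding \<gamma>_def by (auto simp: min_def algebra_simps)
    have "gap h"
      unfolding gap_def
    proof (intro allI impI)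
      fix z assume z: "M - 1 - h \<le> z" "z \<le> 1 + h"
      have "\<beta> * M - \<beta> - \<beta> * h \<le> \<beta> * z"
        using mult_left_mono[OF z(1), of \<beta>] \<beta> by (simp add: algebra_simps)
      then have "real d + 1 + h < \<beta> * z" using h \<open>0 < \<beta> * h\<close> \<gamma>_le by linarith
      moreover have "\<beta> * z \<le> \<beta> + \<beta> * h"
        using mult_left_mono[OF z(2), of \<beta>] \<beta> by (simp add: algebra_simps)
      then have "\<beta> * z < real d + M - h" using h \<open>0 < \<beta> * h\<close> \<gamma>_le by linarith
      ultimately show "\<exists>d::nat. d + 1 \<le> m \<and> real d + 1 + h < \<beta> * z \<and> \<beta> * z < real d + M - h"
        using d(1) by blast
    qed
    moreover have "\<beta> * (M - 1) = M * \<beta> - \<beta>" by (simp add: algebra_simps)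
    then have "\<beta> + 1 < M * \<beta>" using d(2) by linarith
    moreover have "1 < M"
    proof -
      have "0 < \<beta> * (M - 1)" using d(2) by linarith
      then show ?thesis using \<beta> by (simp add: zero_less_mult_iff)
    qed
    ultimately show ?thesis using h(1) by (intro that[of h]) auto
  qed
  define \<epsilon> where "\<epsilon> = min g (min ((M - 1) / 2) ((M * \<beta> - \<beta> - 1) / (2 * (\<beta> + 1))))"
  have \<epsilon>_pos: "0 < \<epsilon>" unfolding \<epsilon>_def using g M1 \<beta> by simp
  have \<epsilon>_le_g: "\<epsilon> \<le> g" unfolding \<epsilon>_def by (rule min.cobounded1)
  have \<epsilon>_le_M: "\<epsilon> \<le> (M - 1) / 2" unfolding \<epsilon>_def by (rule min.coboundedI2, rule min.cobounded1)
  have "\<epsilon> \<le> (M * \<beta> - \<beta> - 1) / (2 * (\<beta> + 1))"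
    unfolding \<epsilon>_def by (rule min.coboundedI2, rule min.cobounded2)
  then have "(\<beta> + 1) * \<epsilon> \<le> (\<beta> + 1) * ((M * \<beta> - \<beta> - 1) / (2 * (\<beta> + 1)))"
    using \<beta> by (intro mult_left_mono) auto
  also have "\<dots> = (M * \<beta> - \<beta> - 1) / 2" using \<beta> by (simp add: field_simps)
  finally have \<epsilon>_small: "(\<beta> + 1) * \<epsilon> \<le> (M * \<beta> - \<beta> - 1) / 2" .
  have "gap \<epsilon>"
    unfolding gap_def
  proof (intro allI impI)
    fix z assume z: "M - 1 - \<epsilon> \<le> z" "z \<le> 1 + \<epsilon>"
    have "M - 1 - g \<le> z" using z(1) \<epsilon>_le_g by linarith
    moreover have "z \<le> 1 + g" using z(2) \<epsilon>_le_g by linarith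
    ultimately obtain d :: nat where "d + 1 \<le> m" "real d + 1 + g < \<beta> * z" "\<beta> * z < real d + M - g"
      using g(2) unfolding gap_def by blast
    then show "\<exists>d::nat. d + 1 \<le> m \<and> real d + 1 + \<epsilon> < \<beta> * z \<and> \<beta> * z < real d + M - \<epsilon>"
      using \<epsilon>_le_g by (intro exI[of _ d]) auto
  qed
  moreover have "1 \<le> m"
  proof -
    have "0 < M * (\<beta> - 1)" using M1 \<beta> by simp
    then show ?thesis using M by simp
  qed
  ultimately have "switching_dynamics m \<beta> M \<epsilon>"
    using \<beta> M \<epsilon>_pos \<epsilon>_le_M \<epsilon>_small M1 unfolding gap_def by unfold_locales (auto simp: algebra_simps)
  then show ?thesis by blast
qed

lemma margin_below_G:
  assumes \<beta>: "1 < \<beta>" and G: "\<beta> < G m"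
  defines "M \<equiv> real m / (\<beta> - 1)"
  shows "2 < M \<or> (\<exists>d::nat. d + 1 \<le> m \<and> real d + 1 < \<beta> * (M - 1) \<and> \<beta> < real d + M)"
proof -
  define k where "k = m div 2"
  have M: "M * (\<beta> - 1) = real m" unfolding M_def using \<beta> by simp
  show ?thesis
  proof (cases "even m")
    case True
    then have "m = 2 * k" "\<beta> < real k + 1" using G unfolding G_def k_def by auto
    then have "2 * (\<beta> - 1) < M * (\<beta> - 1)" using M by simp
    then have "2 < M" by (rule mult_right_less_imp_less) (use \<beta> in simp)
    then show ?thesis ..
  next
    case False
    then have m: "m = 2 * k + 1" unfolding k_def by presburger
    define r where "r = real k"
    have sqrt_bound: "2 * \<beta> - (r + 1) < sqrt (r\<^sup>2 + 6 * r + 5)"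
      using G False unfolding G_def k_def r_def by (simp add: Let_def)
    \<comment> \<open>\<open>G m\<close> is the positive root of \<open>t\<^sup>2 - (r + 1) t - (r + 1)\<close>\<close>
    have Q: "\<beta>\<^sup>2 - (r + 1) * \<beta> - (r + 1) < 0"
    proof (cases "2 * \<beta> < r + 1")
      case True
      then have "\<beta> * (\<beta> - (r + 1)) < 0" using \<beta> by (simp add: mult_pos_neg)
      then show ?thesis unfolding r_def by (simp add: power2_eq_square algebra_simps)
    next
      case False
      then have "(2 * \<beta> - (r + 1))\<^sup>2 < (sqrt (r\<^sup>2 + 6 * r + 5))\<^sup>2"
        using sqrt_bound by (intro power_strict_mono) auto
      also have "\<dots> = r\<^sup>2 + 6 * r + 5" unfolding r_def by simp
      finally show ?thesis by (simp add: power2_eq_square algebra_simps)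
    qed
    have "(M + r - \<beta>) * (\<beta> - 1) = - (\<beta>\<^sup>2 - (r + 1) * \<beta> - (r + 1))"
      using M m unfolding r_def by (simp add: power2_eq_square algebra_simps)
    then have "0 < (M + r - \<beta>) * (\<beta> - 1)" using Q by linarith
    then have "0 < M + r - \<beta>" using \<beta> by (simp add: zero_less_mult_iff)
    then show ?thesis using M m unfolding r_def by (intro disjI2 exI[of _ k]) (auto simp: algebra_simps)
  qed
qed

theorem theorem5p1:
  fixes m :: nat and \<beta> :: real
  assumes "1 < \<beta>" and "\<beta> < G m"
  shows "\<exists>c > 0. \<forall>x. 0 < x \<and> x < real m / (\<beta> - 1) \<longrightarrow>
           ereal c \<le> hausdorff_dim m (Sigma_bm \<beta> m x)"
proof -
  have "(real m / (\<beta> - 1)) * (\<beta> - 1) = real m" using assms(1) by simp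
  then obtain \<epsilon> where "switching_dynamics m \<beta> (real m / (\<beta> - 1)) \<epsilon>"
    using switching_dynamics_exists[OF assms(1)] margin_below_G[OF assms] by blast
  then show ?thesis by (rule switching_dynamics.hausdorff_dim_Sigma_bm_uniform_bound)
qed

end
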